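(* Consider a single context with design set $\mathcal D=\mathcal P\sqcup\mathcal U$. Each design $d$ is Gaussian with mean $\mu^*_d$ and known variance $(\sigma^*_d)^2>0$, all means are distinct, and every mean in $\mathcal P$ exceeds every mean in $\mathcal U$. For $d\in\mathcal P$, $d'\in\mathcal U$ let $$G_{d,d'}(x,y)=\frac{(\mu^*_d-\mu^*_{d'})^2}{(\sigma^*_d)^2/x+(\sigma^*_{d'})^2/y}.$$ Consider the problem of maximizing $\min_{d\in\mathcal P,\,d'\in\mathcal U}G_{d,d'}(\psi(d),\psi(d'))$ over $\psi\ge0$ with $\sum_{d\in\mathcal D}\psi(d)=1$. A feasible $\psi$ is optimal only if there exist $z>0$ and a type $\vartheta\in\{0,1\}^{\mathcal P\times\mathcal U}$ with the following properties: - $\max_{\tilde d\in\mathcal P}\vartheta(\tilde d,d')=1$ for all $d'\in\mathcal U$, and $\max_{\tilde d'\in\mathcal U}\vartheta(d,\tilde d')=1$ for all $d\in\mathcal P$; - for each equivalence class $\mathcal D^l$ ($l=1,\dots,L$) of $\overset{\vartheta}{\sim}$, with $\mathcal P^l=\mathcal D^l\cap\mathcal P$ and $\mathcal U^l=\mathcal D^l\cap\mathcal U$, $$\sum_{d\in\mathcal P^l}\Big(\frac{\psi(d)}{\sigma^*_d}\Big)^2=\sum_{d'\in\mathcal U^l}\Big(\frac{\psi(d')}{\sigma^*_{d'}}\Big)^2;$$ - for all $d\in\mathcal P$, $d'\in\mathcal U$ we have $G_{d,d'}(\psi(d),\psi(d'))\ge z$, with equality if and only if $\vartheta(d,d')=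1$.
   Context: Equivalence relation. Given $\vartheta\in\{0,1\}^{\mathcal P\times\mathcal U}$, the relation $\overset{\vartheta}{\sim}$ on $\mathcal D$ is defined by $\tilde d\overset{\vartheta}{\sim}\bar d$ if there is a chain $(d_1,d_1'),\dots,(d_n,d_n')\in\mathcal P\times\mathcal U$ such that: - $\vartheta(d_i,d_i')=1$ for all $i$; - for each $i<n$, either $d_i=d_{i+1}$ or $d_i'=d_{i+1}'$; - $\tilde d\in\{d_1,d_1'\}$ and $\bar d\in\{d_n,d_n'\}$. This relation partitions $\mathcal D$ into equivalence classes $\mathcal D^1,\dots,\mathcal D^L$. *)

theory Defs
  imports Main "HOL.Real"
begin

text \<open>Rate function G_{d,d'}(x,y); for x = 0 or y = 0 we use the limiting value 0
  (the formula has sigma^2/0 = infinity in the denominator).\<close>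
definition Grate :: "('d \<Rightarrow> real) \<Rightarrow> ('d \<Rightarrow> real) \<Rightarrow> 'd \<Rightarrow> 'd \<Rightarrow> real \<Rightarrow> real \<Rightarrow> real" where
  "Grate mu sigma d d' x y =
     (if x = 0 \<or> y = 0 then 0
      else (mu d - mu d')^2 / ((sigma d)^2 / x + (sigma d')^2 / y))"

definition feasible :: "'d set \<Rightarrow> ('d \<Rightarrow> real) \<Rightarrow> bool" where
  "feasible D psi \<longleftrightarrow> (\<forall>d\<in>D. psi d \<ge> 0) \<and> (\<Sum>d\<in>D. psi d) = 1"

definition objective :: "('d \<Rightarrow> real) \<Rightarrow> ('d \<Rightarrow> real) \<Rightarrow> 'd set \<Rightarrow> 'd set \<Rightarrow> ('d \<Rightarrow> real) \<Rightarrow> real" where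
  "objective mu sigma P U psi =
     Min ((\<lambda>(d, d'). Grate mu sigma d d' (psi d) (psi d')) ` (P \<times> U))"

definition optimal :: "('d \<Rightarrow> real) \<Rightarrow> ('d \<Rightarrow> real) \<Rightarrow> 'd set \<Rightarrow> 'd set \<Rightarrow> ('d \<Rightarrow> real) \<Rightarrow> bool" where
  "optimal mu sigma P U psi \<longleftrightarrow> feasible (P \<union> U) psi \<and>
     (\<forall>phi. feasible (P \<union> U) phi \<longrightarrow> objective mu sigma P U phi \<le> objective mu sigma P U psi)"

text \<open>The relation d~ \<bar>d induced by the type theta (chains of pairs in P x U).\<close>
definition theta_rel :: "('d \<Rightarrow> 'd \<Rightarrow> bool) \<Rightarrow> 'd set \<Rightarrow> 'd set \<Rightarrow> 'd \<Rightarrow> 'd \<Rightarrow> bool" where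
  "theta_rel theta P U a b \<longleftrightarrow>
     (\<exists>ch :: ('d \<times> 'd) list. ch \<noteq> [] \<and>
        (\<forall>i<length ch. fst (ch ! i) \<in> P \<and> snd (ch ! i) \<in> U \<and> theta (fst (ch ! i)) (snd (ch ! i))) \<and>
        (\<forall>i. Suc i < length ch \<longrightarrow> fst (ch ! i) = fst (ch ! Suc i) \<or> snd (ch ! i) = snd (ch ! Suc i)) \<and>
        a \<in> {fst (hd ch), snd (hd ch)} \<and> b \<in> {fst (last ch), snd (last ch)})"

definition theta_class :: "('d \<Rightarrow> 'd \<Rightarrow> bool) \<Rightarrow> 'd set \<Rightarrow> 'd set \<Rightarrow> 'd \<Rightarrow> 'd set" where
  "theta_class theta P U d = {e \<in> P \<union> U. theta_rel theta P U d e}"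

end

theory Submission
  imports Defs Complex_Main
begin

text \<open>Take z to be the optimal value and let \<open>\<vartheta>\<close> mark the active pairs, those where
  \<open>G\<close> attains z. Since the uniform allocation has positive value, z > 0 and every design gets
  positive mass. The derivative of \<open>G(\<psi> d, \<psi> d')\<close> along a direction v is a positive multiple of
  \<open>(\<sigma> d / \<psi> d)\<^sup>2 v d + (\<sigma> d' / \<psi> d')\<^sup>2 v d'\<close>, so at an optimum no mass-preserving direction
  makes this positive on all active pairs. If a set C closed under active pairs had unequal
  weights \<open>\<Sum>(\<psi>/\<sigma>)\<^sup>2\<close> on its P- and U-parts, shifting mass from its heavier to its lighter
  side and compensating uniformly would be such a direction. The \<open>\<vartheta>\<close>-classes are closed,
  which gives the balance equations; so is the singleton of a design in no active pair, which
  gives the covering property.\<close>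

lemma Grate_pos:
  assumes "mu d \<noteq> mu d'" and "sigma d \<noteq> 0" and "sigma d' \<noteq> 0" and "x > 0" and "y > 0"
  shows "Grate mu sigma d d' x y > 0"
  using assms by (simp add: Grate_def add_pos_pos)

lemma Grate_ray_eventually_gt:
  fixes mu sigma :: "'d \<Rightarrow> real"
  assumes "mu d \<noteq> mu d'" and "sigma d \<noteq> 0" and "sigma d' \<noteq> 0" and "x > 0" and "y > 0"
    and "z \<le> Grate mu sigma d d' x y"
    and "Grate mu sigma d d' x y = z \<Longrightarrow> (sigma d / x)^2 * v + (sigma d' / y)^2 * w > 0"
  shows "\<forall>\<^sub>F t in at_right 0. z < Grate mu sigma d d' (x + t * v) (y + t * w)"
proof -
  define a where "a = (sigma d)^2"
  define b where "b = (sigma d')^2"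
  define D where "D = (mu d - mu d')^2"
  define h where "h t = a / (x + t * v) + b / (y + t * w)" for t
  define g where "g t = D / h t" for t
  have "a > 0" "b > 0" "D > 0" using assms(1-3) by (simp_all add: a_def b_def D_def)
  then have h0: "h 0 > 0" using assms(4,5) by (simp add: h_def add_pos_pos)
  have G0: "Grate mu sigma d d' x y = g 0"
    using assms(4,5) by (simp add: Grate_def g_def h_def a_def b_def D_def)
  have lim: "((\<lambda>t. c + t * e) \<longlongrightarrow> c) (at_right 0)" for c e :: real
    by (auto intro!: tendsto_eq_intros)
  have "\<forall>\<^sub>F t in at_right 0. x + t * v > 0 \<and> y + t * w > 0"
    using lim assms(4,5) by (intro eventually_conj order_tendstoD(1))
  then have ray: "\<forall>\<^sub>F t in at_right 0. Grate mu sigma d d' (x + t * v) (y + t * w) = g t"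
    by eventually_elim (simp add: Grate_def g_def h_def a_def b_def D_def)
  define l where "l = D * (a * v / x^2 + b * w / y^2) / (h 0)^2"
  have der: "(g has_real_derivative l) (at 0)"
    unfolding g_def h_def l_def using assms(4,5) h0[unfolded h_def]
    by (auto intro!: derivative_eq_intros simp: power2_eq_square)
      (simp add: divide_simps algebra_simps)
  have "\<forall>\<^sub>F t in at_right 0. z < g t"
  proof (cases "Grate mu sigma d d' x y = z")
    case True
    then have "l > 0"
      using assms(7) \<open>D > 0\<close> h0 by (simp add: l_def a_def b_def power_divide)
    then obtain \<delta> where "\<delta> > 0" "\<forall>t>0. t < \<delta> \<longrightarrow> g 0 < g (0 + t)"
      using DERIV_pos_inc_right[OF der] by blast
    then show ?thesis
      unfolding eventually_at_right_field using True G0 by auto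
  next
    case False
    then have "z < g 0" using assms(6) G0 by simp
    moreover have "(g \<longlongrightarrow> g 0) (at_right 0)"
      using DERIV_isCont[OF der] by (simp add: isCont_def filterlim_at_split)
    ultimately show ?thesis by (simp add: order_tendstoD(1))
  qed
  with ray show ?thesis by eventually_elim simp
qed

lemma objective_le_Grate:
  assumes "finite P" and "finite U" and "d \<in> P" and "d' \<in> U"
  shows "objective mu sigma P U phi \<le> Grate mu sigma d d' (phi d) (phi d')"
  unfolding objective_def using assms by (intro Min_le) force+

lemma less_objective_iff:
  assumes "finite P" and "finite U" and "P \<noteq> {}" and "U \<noteq> {}"
  shows "z < objective mu sigma P U phi \<longleftrightarrow>
    (\<forall>d\<in>P. \<forall>d'\<in>U. z < Grate mu sigma d d' (phi d) (phi d'))"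
  unfolding objective_def using assms by (subst Min_gr_iff) auto

lemma theta_rel_extend:
  assumes "P \<inter> U = {}" and "theta_rel theta P U a b"
    and "d \<in> P" and "d' \<in> U" and "theta d d'" and "b \<in> {d, d'}" and "c \<in> {d, d'}"
  shows "theta_rel theta P U a c"
proof -
  obtain ch where ne: "ch \<noteq> []"
    and pairs: "\<forall>i<length ch. fst (ch ! i) \<in> P \<and> snd (ch ! i) \<in> U \<and> theta (fst (ch ! i)) (snd (ch ! i))"
    and steps: "\<forall>i. Suc i < length ch \<longrightarrow> fst (ch ! i) = fst (ch ! Suc i) \<or> snd (ch ! i) = snd (ch ! Suc i)"
    and head: "a \<in> {fst (hd ch), snd (hd ch)}" and last: "b \<in> {fst (last ch), snd (last ch)}"
    using assms(2) unfolding theta_rel_def by blast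
  have "fst (last ch) \<in> P" "snd (last ch) \<in> U"
    using pairs ne by (simp_all add: last_conv_nth)
  then have link: "fst (last ch) = d \<or> snd (last ch) = d'"
    using last assms(1,3,4,6) by auto
  define ch' where "ch' = ch @ [(d, d')]"
  have "\<forall>i<length ch'. fst (ch' ! i) \<in> P \<and> snd (ch' ! i) \<in> U \<and> theta (fst (ch' ! i)) (snd (ch' ! i))"
    using pairs assms(3-5) by (auto simp: ch'_def nth_append less_Suc_eq)
  moreover have "\<forall>i. Suc i < length ch' \<longrightarrow> fst (ch' ! i) = fst (ch' ! Suc i) \<or> snd (ch' ! i) = snd (ch' ! Suc i)"
  proof (intro allI impI)
    fix i assume "Suc i < length ch'"
    then have "Suc i < length ch \<or> i = length ch - 1" by (auto simp: ch'_def)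
    then show "fst (ch' ! i) = fst (ch' ! Suc i) \<or> snd (ch' ! i) = snd (ch' ! Suc i)"
    proof
      assume "Suc i < length ch"
      then show ?thesis using steps by (simp add: ch'_def nth_append)
    next
      assume i: "i = length ch - 1"
      then have "ch' ! i = last ch" "ch' ! Suc i = (d, d')"
        using ne by (simp_all add: ch'_def nth_append last_conv_nth)
      then show ?thesis using link by simp
    qed
  qed
  ultimately show ?thesis
    unfolding theta_rel_def using ne head assms(7) by (intro exI[of _ ch']) (auto simp: ch'_def)
qed

lemma theta_class_closed:
  assumes "P \<inter> U = {}" and "d \<in> P" and "d' \<in> U" and "theta d d'"
  shows "d \<in> theta_class theta P U a \<longleftrightarrow> d' \<in> theta_class theta P U a"
  using assms theta_rel_extend[of P U theta a _ d d'] unfolding theta_class_def by blast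

locale optimal_allocation =
  fixes P U :: "'d set" and mu sigma psi :: "'d \<Rightarrow> real"
  assumes finite_P: "finite P" and finite_U: "finite U"
    and P_nonempty: "P \<noteq> {}" and U_nonempty: "U \<noteq> {}" and disjoint: "P \<inter> U = {}"
    and sigma_pos: "\<And>e. e \<in> P \<union> U \<Longrightarrow> sigma e > 0"
    and mu_separated: "\<And>d d'. d \<in> P \<Longrightarrow> d' \<in> U \<Longrightarrow> mu d' < mu d"
    and optimal: "optimal mu sigma P U psi"
begin

definition opt_value :: real where
  "opt_value = objective mu sigma P U psi"

definition active :: "'d \<Rightarrow> 'd \<Rightarrow> bool" where
  "active d d' \<longleftrightarrow> Grate mu sigma d d' (psi d) (psi d') = opt_value"

definition weight :: "'d \<Rightarrow> real" where
  "weight e = (psi e / sigma e)^2"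

lemma opt_value_le_Grate: "d \<in> P \<Longrightarrow> d' \<in> U \<Longrightarrow> opt_value \<le> Grate mu sigma d d' (psi d) (psi d')"
  unfolding opt_value_def using finite_P finite_U by (rule objective_le_Grate)

lemma objective_le_opt_value: "feasible (P \<union> U) phi \<Longrightarrow> objective mu sigma P U phi \<le> opt_value"
  using optimal unfolding optimal_def opt_value_def by blast

lemma opt_value_pos: "opt_value > 0"
proof -
  define n where "n = real (card (P \<union> U))"
  have "n > 0" using finite_P finite_U P_nonempty by (simp add: n_def card_gt_0_iff)
  then have "feasible (P \<union> U) (\<lambda>_. 1 / n)" by (simp add: feasible_def n_def)
  moreover have "0 < objective mu sigma P U (\<lambda>_. 1 / n)"
    using \<open>n > 0\<close> sigma_pos mu_separated
    by (subst less_objective_iff[OF finite_P finite_U P_nonempty U_nonempty])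
      (force intro!: Grate_pos)
  ultimately show ?thesis using objective_le_opt_value by fastforce
qed

lemma psi_pos: "e \<in> P \<union> U \<Longrightarrow> psi e > 0"
proof -
  assume e: "e \<in> P \<union> U"
  have "psi e \<ge> 0" using optimal e by (simp add: optimal_def feasible_def)
  moreover obtain d d' where "d \<in> P" "d' \<in> U" "e = d \<or> e = d'"
    using e P_nonempty U_nonempty by blast
  then have "Grate mu sigma d d' (psi d) (psi d') \<noteq> 0"
    using opt_value_le_Grate opt_value_pos by fastforce
  ultimately show "psi e > 0"
    using \<open>e = d \<or> e = d'\<close> by (cases "psi e = 0") (auto simp: Grate_def)
qed

lemma weight_pos:
  assumes "e \<in> P \<union> U"
  shows "weight e > 0"
  using psi_pos[OF assms] sigma_pos[OF assms] by (simp add: weight_def)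

lemma no_ascent_direction:
  assumes balanced: "(\<Sum>e\<in>P \<union> U. v e) = 0"
    and ascent: "\<And>d d'. d \<in> P \<Longrightarrow> d' \<in> U \<Longrightarrow> active d d' \<Longrightarrow>
      (sigma d / psi d)^2 * v d + (sigma d' / psi d')^2 * v d' > 0"
  shows False
proof -
  define ray where "ray t e = psi e + t * v e" for t e
  have "\<forall>\<^sub>F t in at_right 0. \<forall>e\<in>P \<union> U. 0 < ray t e"
    using finite_P finite_U psi_pos unfolding ray_def
    by (intro eventually_ball_finite ballI order_tendstoD(1)) (auto intro!: tendsto_eq_intros)
  moreover have
    "\<forall>\<^sub>F t in at_right 0. \<forall>d\<in>P. \<forall>d'\<in>U. opt_value < Grate mu sigma d d' (ray t d) (ray t d')"
    using finite_P finite_U unfolding ray_def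
  proof (intro eventually_ball_finite ballI Grate_ray_eventually_gt)
    fix d d' assume "d \<in> P" "d' \<in> U"
    then show "mu d \<noteq> mu d'" "sigma d \<noteq> 0" "sigma d' \<noteq> 0" "psi d > 0" "psi d' > 0"
        "opt_value \<le> Grate mu sigma d d' (psi d) (psi d')"
      using mu_separated sigma_pos psi_pos opt_value_le_Grate by (fastforce simp: less_imp_neq)+
    show "Grate mu sigma d d' (psi d) (psi d') = opt_value \<Longrightarrow>
        (sigma d / psi d)^2 * v d + (sigma d' / psi d')^2 * v d' > 0"
      using ascent \<open>d \<in> P\<close> \<open>d' \<in> U\<close> by (simp add: active_def)
  qed
  ultimately obtain t where pos: "\<forall>e\<in>P \<union> U. 0 < ray t e"
    and better: "\<forall>d\<in>P. \<forall>d'\<in>U. opt_value < Grate mu sigma d d' (ray t d) (ray t d')"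
    using eventually_happens[OF eventually_conj] trivial_limit_at_right_real by blast
  have "(\<Sum>e\<in>P \<union> U. ray t e) = (\<Sum>e\<in>P \<union> U. psi e) + t * (\<Sum>e\<in>P \<union> U. v e)"
    by (simp add: ray_def sum.distrib sum_distrib_left)
  then have "feasible (P \<union> U) (ray t)"
    using optimal pos balanced by (auto simp: optimal_def feasible_def less_imp_le)
  moreover have "opt_value < objective mu sigma P U (ray t)"
    using better by (simp add: less_objective_iff[OF finite_P finite_U P_nonempty U_nonempty])
  ultimately show False using objective_le_opt_value by fastforce
qed

lemma weight_balanced_on_closed:
  assumes C: "C \<subseteq> P \<union> U"
    and closed: "\<And>d d'. d \<in> P \<Longrightarrow> d' \<in> U \<Longrightarrow> active d d' \<Longrightarrow> d \<in> C \<longleftrightarrow> d' \<in> C"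
  shows "sum weight (C \<inter> P) = sum weight (C \<inter> U)"
proof (rule ccontr)
  define A where "A = sum weight (C \<inter> P)"
  define B where "B = sum weight (C \<inter> U)"
  define M where "M = sum weight (P \<union> U)"
  assume "sum weight (C \<inter> P) \<noteq> sum weight (C \<inter> U)"
  then have "A \<noteq> B" by (simp add: A_def B_def)
  have "M > 0"
    unfolding M_def using finite_P finite_U P_nonempty weight_pos by (intro sum_pos) auto
  define \<beta> where "\<beta> = (A - B)^2 / M"
  have "\<beta> > 0" using \<open>A \<noteq> B\<close> \<open>M > 0\<close> by (simp add: \<beta>_def)
  \<comment> \<open>along v every active pair gains \<open>2\<beta>\<close> to first order, while the total mass is unchanged\<close>
  define shift where "shift e = (A - B) * (of_bool (e \<in> C \<inter> U) - of_bool (e \<in> C \<inter> P))" for e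
  define v where "v e = weight e * (\<beta> + shift e)" for e
  have "(\<Sum>e\<in>P \<union> U. v e) = \<beta> * M + (A - B) *
      ((\<Sum>e\<in>P \<union> U. weight e * of_bool (e \<in> C \<inter> U)) - (\<Sum>e\<in>P \<union> U. weight e * of_bool (e \<in> C \<inter> P)))"
    unfolding v_def shift_def M_def
    by (simp only: ring_distribs sum.distrib sum_subtractf sum_distrib_left
        mult.assoc mult.commute mult.left_commute)
  also have "\<dots> = \<beta> * M - (A - B)^2"
  proof -
    have restrict: "(\<Sum>e\<in>P \<union> U. weight e * of_bool (e \<in> S)) = sum weight S"
      if "S \<subseteq> P \<union> U" for S
      using that finite_P finite_U by (simp add: Int_absorb1)
    have "(\<Sum>e\<in>P \<union> U. weight e * of_bool (e \<in> C \<inter> U)) = B"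
      unfolding B_def by (rule restrict) (use C in auto)
    moreover have "(\<Sum>e\<in>P \<union> U. weight e * of_bool (e \<in> C \<inter> P)) = A"
      unfolding A_def by (rule restrict) (use C in auto)
    ultimately show ?thesis by (simp add: power2_eq_square algebra_simps)
  qed
  also have "\<dots> = 0" using \<open>M > 0\<close> by (simp add: \<beta>_def)
  finally have balanced: "(\<Sum>e\<in>P \<union> U. v e) = 0" .
  have "(sigma d / psi d)^2 * v d + (sigma d' / psi d')^2 * v d' = 2 * \<beta>"
    if "d \<in> P" "d' \<in> U" "active d d'" for d d'
  proof -
    have "(sigma e / psi e)^2 * v e = \<beta> + shift e" if "e \<in> P \<union> U" for e
      using psi_pos[OF that] sigma_pos[OF that] by (simp add: v_def weight_def power_divide)
    moreover have "shift d + shift d' = 0"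
      using closed[OF that] that disjoint by (auto simp: shift_def)
    ultimately show ?thesis using that by simp
  qed
  then show False using no_ascent_direction[OF balanced] \<open>\<beta> > 0\<close> by simp
qed

lemma active_covers:
  assumes "e \<in> P \<union> U"
  shows "\<exists>d\<in>P. \<exists>d'\<in>U. active d d' \<and> (d = e \<or> d' = e)"
proof (rule ccontr)
  assume isolated: "\<not> (\<exists>d\<in>P. \<exists>d'\<in>U. active d d' \<and> (d = e \<or> d' = e))"
  have "sum weight ({e} \<inter> P) = sum weight ({e} \<inter> U)"
  proof (rule weight_balanced_on_closed)
    show "{e} \<subseteq> P \<union> U" using assms by simp
    show "d \<in> {e} \<longleftrightarrow> d' \<in> {e}" if "d \<in> P" "d' \<in> U" "active d d'" for d d'
      using isolated that by blast
  qed
  moreover have "{e} \<inter> P = {e} \<and> {e} \<inter> U = {} \<or> {e} \<inter> P = {} \<and> {e} \<inter> U = {e}"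
    using assms disjoint by blast
  ultimately show False using weight_pos[OF assms] by auto
qed

end

theorem proposition6:
  fixes P U :: "'d set" and mu sigma psi :: "'d \<Rightarrow> real"
  assumes "finite P" and "finite U" and "P \<noteq> {}" and "U \<noteq> {}" and "P \<inter> U = {}"
    and "\<forall>d\<in>P \<union> U. sigma d > 0"
    and "inj_on mu (P \<union> U)"
    and "\<forall>d\<in>P. \<forall>d'\<in>U. mu d > mu d'"
    and "optimal mu sigma P U psi"
  shows "\<exists>z::real. z > 0 \<and> (\<exists>theta :: 'd \<Rightarrow> 'd \<Rightarrow> bool.
           (\<forall>d'\<in>U. \<exists>d\<in>P. theta d d') \<and> (\<forall>d\<in>P. \<exists>d'\<in>U. theta d d') \<and>
           (\<forall>d\<in>P \<union> U.
              (\<Sum>e\<in>theta_class theta P U d \<inter> P. (psi e / sigma e)^2) =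
              (\<Sum>e\<in>theta_class theta P U d \<inter> U. (psi e / sigma e)^2)) \<and>
           (\<forall>d\<in>P. \<forall>d'\<in>U. Grate mu sigma d d' (psi d) (psi d') \<ge> z \<and>
              (Grate mu sigma d d' (psi d) (psi d') = z \<longleftrightarrow> theta d d')))"
proof -
  interpret optimal_allocation P U mu sigma psi
    using assms by unfold_locales auto
  have classes_balanced:
    "sum weight (theta_class active P U d \<inter> P) = sum weight (theta_class active P U d \<inter> U)" for d
    using theta_class_closed[OF disjoint]
    by (intro weight_balanced_on_closed) (auto simp: theta_class_def)
  show ?thesis
  proof (intro exI[of _ opt_value] conjI exI[of _ active] ballI)
    show "opt_value > 0" by (rule opt_value_pos)
    show "\<exists>d\<in>P. active d d'" if "d' \<in> U" for d'
      using active_covers[of d'] that disjoint by blast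
    show "\<exists>d'\<in>U. active d d'" if "d \<in> P" for d
      using active_covers[of d] that disjoint by blast
    show "(\<Sum>e\<in>theta_class active P U d \<inter> P. (psi e / sigma e)^2) =
        (\<Sum>e\<in>theta_class active P U d \<inter> U. (psi e / sigma e)^2)" for d
      using classes_balanced by (simp add: weight_def[abs_def])
    show "opt_value \<le> Grate mu sigma d d' (psi d) (psi d')" if "d \<in> P" "d' \<in> U" for d d'
      using that by (rule opt_value_le_Grate)
    show "Grate mu sigma d d' (psi d) (psi d') = opt_value \<longleftrightarrow> active d d'" for d d'
      by (simp add: active_def)
  qed
qed

end
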